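(* Consider the second-order Kuramoto model with bonding force $$\dot\theta_i=\omega_i,\qquad \dot\omega_i=\frac{1}{N}\sum_{j=1}^N\big[\kappa_0\cos(\theta_j-\theta_i)+\kappa_1\big](\omega_j-\omega_i)+\frac{\kappa_2}{N}\sum_{j=1}^N\big[|\theta_j-\theta_i|-\theta^\infty_{ij}\big]\operatorname{sgn}(\theta_j-\theta_i),\quad i\in[N].$$ Suppose $(\Theta^0,W^0)\in\mathcal{S}$, $\mathcal{E}(0)<\frac{\kappa_2(\min_{i\ne j}\theta^\infty_{ij})^2}{2N}$, $\kappa_0\cos\mathcal{U}+\kappa_1>0$, $\kappa_2>0$, and let $\{\theta_i\}$ be a global smooth solution. Then $$\inf_{0\le t<\infty}\min_{i\ne j}|\theta_j(t)-\theta_i(t)|\ge\mathcal{L}>0.$$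
   Context: $N\ge2$, $\kappa_0,\kappa_1\ge0$; $[\theta^\infty_{ij}]$ real symmetric with zero diagonal; $\operatorname{sgn}$ the sign function. $\mathcal{E}:=\frac12\sum_i|\omega_i|^2+\frac{\kappa_2}{4N}\sum_{i,j}(|\theta_j-\theta_i|-\theta^\infty_{ij})^2$; $\mathcal{U}:=\max_{i\ne j}\theta^\infty_{ij}+\sqrt{2N\mathcal{E}(0)/\kappa_2}$; $\mathcal{L}:=\min_{i\ne j}\theta^\infty_{ij}-\sqrt{2N\mathcal{E}(0)/\kappa_2}$; $\mathcal{S}:=\{(\Theta,W)\in\mathbb{R}^{2N}:|\theta_i-\theta_j|<\mathcal{U}<\pi\ \forall i,j\}$. *)

theory Defs
  imports "HOL-Analysis.Analysis"
begin

text \<open>Oscillators are indexed by 0..N-1 (i < N). Theta, W : nat => real are configurations.\<close>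

definition kenergy :: "nat \<Rightarrow> real \<Rightarrow> (nat \<Rightarrow> nat \<Rightarrow> real) \<Rightarrow> (nat \<Rightarrow> real) \<Rightarrow> (nat \<Rightarrow> real) \<Rightarrow> real" where
  "kenergy N \<kappa>2 thinf Th W =
     (1/2) * (\<Sum>i<N. (W i)^2)
     + \<kappa>2 / (4 * real N) * (\<Sum>i<N. \<Sum>j<N. (\<bar>Th j - Th i\<bar> - thinf i j)^2)"

definition Ubound :: "nat \<Rightarrow> real \<Rightarrow> (nat \<Rightarrow> nat \<Rightarrow> real) \<Rightarrow> real \<Rightarrow> real" where
  "Ubound N \<kappa>2 thinf E0 =
     Max {thinf i j | i j. i < N \<and> j < N \<and> i \<noteq> j} + sqrt (2 * real N * E0 / \<kappa>2)"

definition Lbound :: "nat \<Rightarrow> real \<Rightarrow> (nat \<Rightarrow> nat \<Rightarrow> real) \<Rightarrow> real \<Rightarrow> real" where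
  "Lbound N \<kappa>2 thinf E0 =
     Min {thinf i j | i j. i < N \<and> j < N \<and> i \<noteq> j} - sqrt (2 * real N * E0 / \<kappa>2)"

end

theory Submission
  imports Defs
begin

text \<open>Along the flow the energy \<open>\<E>\<close> has derivative
  \<open>-(1/2N) \<Sum>\<^sub>i\<^sub>j (\<kappa>\<^sub>0 cos(\<theta>\<^sub>j - \<theta>\<^sub>i) + \<kappa>\<^sub>1)(\<omega>\<^sub>j - \<omega>\<^sub>i)\<^sup>2\<close>, which is \<open>\<le> 0\<close> as long as no two
  phases collide and all coupling weights are positive. Conversely, while \<open>\<E> \<le> \<E>(0)\<close>, each bond
  term of the energy gives \<open>\<bar>\<bar>\<theta>\<^sub>j - \<theta>\<^sub>i\<bar> - \<theta>\<^sup>\<infinity>\<^sub>i\<^sub>j\<bar> \<le> sqrt(2N\<E>(0)/\<kappa>\<^sub>2)\<close>, so every bond length lies in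
  \<open>[\<L>, \<U>] \<subseteq> (0, \<pi>)\<close>, which keeps the phases apart and the weights \<open>\<ge> \<kappa>\<^sub>0 cos \<U> + \<kappa>\<^sub>1 > 0\<close>.
  A first-exit-time argument closes the loop: \<open>\<E>\<close> never exceeds \<open>\<E>(0)\<close>, hence all bond
  lengths stay \<open>\<ge> \<L>\<close> forever. Smallness of \<open>\<E>(0)\<close> gives \<open>\<L> > 0\<close>.\<close>

lemma at_within_atLeast:
  fixes t :: real
  assumes "a < t"
  shows "at t within {a..} = at t"
  using assms by (intro at_within_interior) simp

lemma has_real_derivative_abs:
  fixes x :: real
  assumes "x \<noteq> 0"
  shows "(abs has_real_derivative sgn x) (at x)"
proof -
  have "(\<lambda>h. h * sgn x) = (*) (sgn x)"
    by (simp add: fun_eq_iff mult.commute)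
  then show ?thesis
    using has_derivative_norm[OF assms]
    by (simp add: has_field_derivative_def real_norm_def[abs_def])
qed

lemma bond_energy_has_derivative:
  fixes g :: "real \<Rightarrow> real"
  assumes "(g has_real_derivative g') (at t)" and "g t \<noteq> 0"
  shows "((\<lambda>s. (\<bar>g s\<bar> - c)^2) has_real_derivative 2 * ((\<bar>g t\<bar> - c) * sgn (g t)) * g') (at t)"
proof -
  have "((\<lambda>s. \<bar>g s\<bar>) has_real_derivative sgn (g t) * g') (at t)"
    by (rule DERIV_chain2[OF has_real_derivative_abs[OF assms(2)] assms(1)])
  then have "((\<lambda>s. \<bar>g s\<bar> - c) has_real_derivative sgn (g t) * g') (at t)"
    using DERIV_diff[OF _ DERIV_const] by fastforce
  from DERIV_power[OF this, of 2] show ?thesis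
    by (rule DERIV_cong) (simp add: algebra_simps)
qed

lemma sum_symmetric_weighted_increments:
  fixes a :: "'i \<Rightarrow> 'i \<Rightarrow> real" and w :: "'i \<Rightarrow> real"
  assumes "\<And>i j. i \<in> I \<Longrightarrow> j \<in> I \<Longrightarrow> a i j = a j i"
  shows "(\<Sum>i\<in>I. \<Sum>j\<in>I. a i j * w i * (w j - w i)) = -(1/2) * (\<Sum>i\<in>I. \<Sum>j\<in>I. a i j * (w j - w i)^2)"
proof -
  let ?X = "\<Sum>i\<in>I. \<Sum>j\<in>I. a i j * w i * (w j - w i)"
  have "?X = (\<Sum>i\<in>I. \<Sum>j\<in>I. a i j * w j * (w i - w j))"
    by (subst sum.swap) (auto intro!: sum.cong simp: assms)
  then have "?X + ?X = (\<Sum>i\<in>I. \<Sum>j\<in>I. a i j * w i * (w j - w i) + a i j * w j * (w i - w j))"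
    by (simp add: sum.distrib)
  also have "\<dots> = (\<Sum>i\<in>I. \<Sum>j\<in>I. - (a i j * (w j - w i)^2))"
    by (intro sum.cong refl) (simp add: power2_eq_square algebra_simps)
  finally show ?thesis
    by (simp add: sum_negf)
qed

lemma sum_antisymmetric_increments:
  fixes f :: "'i \<Rightarrow> 'i \<Rightarrow> real" and w :: "'i \<Rightarrow> real"
  assumes "\<And>i j. i \<in> I \<Longrightarrow> j \<in> I \<Longrightarrow> f j i = - f i j"
  shows "(\<Sum>i\<in>I. \<Sum>j\<in>I. f i j * (w j - w i)) = -2 * (\<Sum>i\<in>I. \<Sum>j\<in>I. w i * f i j)"
proof -
  have "(\<Sum>i\<in>I. \<Sum>j\<in>I. f i j * w j) = (\<Sum>i\<in>I. \<Sum>j\<in>I. - (w i * f i j))"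
    by (subst sum.swap) (intro sum.cong refl, metis assms mult.commute mult_minus_left)
  also have "\<dots> = - (\<Sum>i\<in>I. \<Sum>j\<in>I. w i * f i j)"
    by (simp add: sum_negf)
  finally have swap: "(\<Sum>i\<in>I. \<Sum>j\<in>I. f i j * w j) = - (\<Sum>i\<in>I. \<Sum>j\<in>I. w i * f i j)" .
  have "(\<Sum>i\<in>I. \<Sum>j\<in>I. f i j * (w j - w i))
      = (\<Sum>i\<in>I. \<Sum>j\<in>I. f i j * w j) - (\<Sum>i\<in>I. \<Sum>j\<in>I. w i * f i j)"
    by (simp add: sum_subtractf algebra_simps)
  with swap show ?thesis
    by simp
qed

lemma continuous_le_persists_under_local_descent:
  fixes E :: "real \<Rightarrow> real"
  assumes "a \<le> b" and cont: "continuous_on {a..b} E" and "E a \<le> c"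
    and descent: "\<And>s. a \<le> s \<Longrightarrow> s < b \<Longrightarrow> E s \<le> c \<Longrightarrow>
        \<exists>s'>s. \<forall>x. s < x \<longrightarrow> x < s' \<longrightarrow> (\<exists>D. (E has_real_derivative D) (at x) \<and> D \<le> 0)"
  shows "E b \<le> c"
proof (rule ccontr)
  assume "\<not> E b \<le> c"
  define Z where "Z = {a..b} \<inter> E -` {..c}"
  have "closed Z"
    unfolding Z_def using cont by (rule continuous_closed_preimage) auto
  moreover have "a \<in> Z"
    using assms by (simp add: Z_def)
  moreover have bdd: "bdd_above Z"
    by (rule bdd_aboveI[of _ b]) (simp add: Z_def)
  ultimately have "Sup Z \<in> Z"
    by (intro closed_contains_Sup) auto
  define s where "s = Sup Z"
  have s: "a \<le> s" "s \<le> b" "E s \<le> c"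
    using \<open>Sup Z \<in> Z\<close> by (auto simp: Z_def s_def)
  with \<open>\<not> E b \<le> c\<close> have "s < b"
    by (metis order_le_less)
  then obtain s' where "s < s'"
    and deriv: "\<forall>x. s < x \<longrightarrow> x < s' \<longrightarrow> (\<exists>D. (E has_real_derivative D) (at x) \<and> D \<le> 0)"
    using descent s by blast
  define b' where "b' = min ((s + s') / 2) b"
  have b': "s < b'" "b' \<le> b" "b' < s'"
    using \<open>s < b\<close> \<open>s < s'\<close> by (auto simp: b'_def min_def)
  have "E b' \<le> E s"
  proof (rule DERIV_nonpos_imp_decreasing_open[where f = E])
    show "s \<le> b'"
      using b' by simp
    show "\<exists>D. (E has_real_derivative D) (at x) \<and> D \<le> 0" if "s < x" "x < b'" for x
      using deriv that b'(3) by simp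
    show "continuous_on {s..b'} E"
      using cont by (rule continuous_on_subset) (use s b' in auto)
  qed
  then have "b' \<in> Z"
    using b' s by (simp add: Z_def)
  then have "b' \<le> s"
    unfolding s_def using bdd by (rule cSup_upper)
  with \<open>s < b'\<close> show False
    by simp
qed

definition bond_force :: "(nat \<Rightarrow> nat \<Rightarrow> real) \<Rightarrow> (nat \<Rightarrow> real) \<Rightarrow> nat \<Rightarrow> nat \<Rightarrow> real" where
  "bond_force c Th i j = (\<bar>Th j - Th i\<bar> - c i j) * sgn (Th j - Th i)"

lemma bond_force_antisym:
  assumes "c i j = c j i"
  shows "bond_force c Th j i = - bond_force c Th i j"
proof -
  have "sgn (Th i - Th j) = - sgn (Th j - Th i)"
    by (metis minus_diff_eq sgn_minus)
  then show ?thesis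
    using assms by (simp add: bond_force_def abs_minus_commute)
qed

lemma kenergy_has_derivative:
  fixes \<theta> \<omega> :: "real \<Rightarrow> nat \<Rightarrow> real" and F :: "nat \<Rightarrow> real"
  assumes d\<theta>: "\<And>i. i < N \<Longrightarrow> ((\<lambda>s. \<theta> s i) has_real_derivative \<omega> t i) (at t)"
    and d\<omega>: "\<And>i. i < N \<Longrightarrow> ((\<lambda>s. \<omega> s i) has_real_derivative F i) (at t)"
    and separated: "\<And>i j. i < N \<Longrightarrow> j < N \<Longrightarrow> i \<noteq> j \<Longrightarrow> \<theta> t j \<noteq> \<theta> t i"
  shows "((\<lambda>s. kenergy N \<kappa>2 c (\<theta> s) (\<omega> s)) has_real_derivative
           (\<Sum>i<N. \<omega> t i * F i)
           + \<kappa>2 / (2 * real N) * (\<Sum>i<N. \<Sum>j<N. bond_force c (\<theta> t) i j * (\<omega> t j - \<omega> t i))) (at t)"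
proof -
  have kinetic: "((\<lambda>s. (1/2) * (\<Sum>i<N. (\<omega> s i)^2)) has_real_derivative
      (1/2) * (\<Sum>i<N. 2 * \<omega> t i * F i)) (at t)"
  proof (intro DERIV_cmult DERIV_sum)
    fix i assume "i \<in> {..<N}"
    then show "((\<lambda>s. (\<omega> s i)^2) has_real_derivative 2 * \<omega> t i * F i) (at t)"
      by (intro DERIV_cong[OF DERIV_power[OF d\<omega>]]) (auto simp: algebra_simps)
  qed
  have bond: "((\<lambda>s. (\<bar>\<theta> s j - \<theta> s i\<bar> - c i j)^2) has_real_derivative
      2 * bond_force c (\<theta> t) i j * (\<omega> t j - \<omega> t i)) (at t)"
    if "i < N" "j < N" for i j
  proof (cases "i = j")
    case True
    then show ?thesis
      by (simp add: bond_force_def)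
  next
    case False
    have "((\<lambda>s. \<theta> s j - \<theta> s i) has_real_derivative \<omega> t j - \<omega> t i) (at t)"
      using that by (intro DERIV_diff d\<theta>)
    from bond_energy_has_derivative[OF this] separated[OF that False] show ?thesis
      by (simp add: bond_force_def)
  qed
  have potential: "((\<lambda>s. \<kappa>2 / (4 * real N) * (\<Sum>i<N. \<Sum>j<N. (\<bar>\<theta> s j - \<theta> s i\<bar> - c i j)^2))
      has_real_derivative \<kappa>2 / (4 * real N) *
        (\<Sum>i<N. \<Sum>j<N. 2 * bond_force c (\<theta> t) i j * (\<omega> t j - \<omega> t i))) (at t)"
    by (intro DERIV_cmult DERIV_sum bond) auto
  have "(1/2) * (\<Sum>i<N. 2 * \<omega> t i * F i)
      + \<kappa>2 / (4 * real N) * (\<Sum>i<N. \<Sum>j<N. 2 * bond_force c (\<theta> t) i j * (\<omega> t j - \<omega> t i))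
    = (\<Sum>i<N. \<omega> t i * F i)
      + \<kappa>2 / (2 * real N) * (\<Sum>i<N. \<Sum>j<N. bond_force c (\<theta> t) i j * (\<omega> t j - \<omega> t i))"
    by (simp add: sum_distrib_left[symmetric] mult.assoc)
  with DERIV_add[OF kinetic potential] show ?thesis
    unfolding kenergy_def by (rule DERIV_cong)
qed

text \<open>The bonding forces are antisymmetric, so their work cancels against the change of the
  bond energy; only the velocity alignment term dissipates.\<close>

lemma kenergy_dissipation:
  fixes \<theta> \<omega> :: "real \<Rightarrow> nat \<Rightarrow> real" and a c :: "nat \<Rightarrow> nat \<Rightarrow> real"
  assumes "0 < N"
    and c_sym: "\<And>i j. i < N \<Longrightarrow> j < N \<Longrightarrow> c i j = c j i"
    and a_sym: "\<And>i j. i < N \<Longrightarrow> j < N \<Longrightarrow> a i j = a j i"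
    and d\<theta>: "\<And>i. i < N \<Longrightarrow> ((\<lambda>s. \<theta> s i) has_real_derivative \<omega> t i) (at t)"
    and d\<omega>: "\<And>i. i < N \<Longrightarrow> ((\<lambda>s. \<omega> s i) has_real_derivative
          (1 / real N) * (\<Sum>j<N. a i j * (\<omega> t j - \<omega> t i))
          + (\<kappa>2 / real N) * (\<Sum>j<N. bond_force c (\<theta> t) i j)) (at t)"
    and separated: "\<And>i j. i < N \<Longrightarrow> j < N \<Longrightarrow> i \<noteq> j \<Longrightarrow> \<theta> t j \<noteq> \<theta> t i"
  shows "((\<lambda>s. kenergy N \<kappa>2 c (\<theta> s) (\<omega> s)) has_real_derivative
           -(1 / (2 * real N)) * (\<Sum>i<N. \<Sum>j<N. a i j * (\<omega> t j - \<omega> t i)^2)) (at t)"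
proof -
  define w where "w = \<omega> t"
  define f where "f = bond_force c (\<theta> t)"
  define F where "F i = (1 / real N) * (\<Sum>j<N. a i j * (w j - w i)) + (\<kappa>2 / real N) * (\<Sum>j<N. f i j)"
    for i
  have d\<omega>': "((\<lambda>s. \<omega> s i) has_real_derivative F i) (at t)" if "i < N" for i
    using d\<omega>[OF that] by (simp only: F_def w_def f_def)
  have energy: "((\<lambda>s. kenergy N \<kappa>2 c (\<theta> s) (\<omega> s)) has_real_derivative
      (\<Sum>i<N. w i * F i) + \<kappa>2 / (2 * real N) * (\<Sum>i<N. \<Sum>j<N. f i j * (w j - w i))) (at t)"
    unfolding w_def f_def by (rule kenergy_has_derivative[OF d\<theta> d\<omega>' separated])
  have alignment: "(\<Sum>i<N. \<Sum>j<N. a i j * w i * (w j - w i))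
      = -(1/2) * (\<Sum>i<N. \<Sum>j<N. a i j * (w j - w i)^2)"
    by (rule sum_symmetric_weighted_increments) (auto intro: a_sym)
  have bonding: "(\<Sum>i<N. \<Sum>j<N. f i j * (w j - w i)) = -2 * (\<Sum>i<N. \<Sum>j<N. w i * f i j)"
    by (rule sum_antisymmetric_increments) (auto simp: f_def intro!: bond_force_antisym c_sym)
  have "(\<Sum>i<N. w i * F i) = (\<Sum>i<N. (1 / real N) * (\<Sum>j<N. a i j * w i * (w j - w i))
      + (\<kappa>2 / real N) * (\<Sum>j<N. w i * f i j))"
    by (intro sum.cong refl) (simp add: F_def sum_distrib_left algebra_simps)
  also have "\<dots> = (1 / real N) * (\<Sum>i<N. \<Sum>j<N. a i j * w i * (w j - w i))
      + (\<kappa>2 / real N) * (\<Sum>i<N. \<Sum>j<N. w i * f i j)"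
    by (simp add: sum.distrib sum_distrib_left)
  finally have power: "(\<Sum>i<N. w i * F i) = \<dots>" .
  have "(\<Sum>i<N. w i * F i) + \<kappa>2 / (2 * real N) * (\<Sum>i<N. \<Sum>j<N. f i j * (w j - w i))
      = -(1 / (2 * real N)) * (\<Sum>i<N. \<Sum>j<N. a i j * (w j - w i)^2)"
  proof -
    have "(1 / real N) * (-(1/2) * A) + (\<kappa>2 / real N) * B + \<kappa>2 / (2 * real N) * (-2 * B)
        = -(1 / (2 * real N)) * A" for A B :: real
      using \<open>0 < N\<close> by (simp add: field_simps)
    then show ?thesis
      unfolding power alignment bonding .
  qed
  from energy this show ?thesis
    unfolding w_def by (rule DERIV_cong)
qed

lemma finite_offdiagonal_values:
  fixes f :: "nat \<Rightarrow> nat \<Rightarrow> 'a"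
  shows "finite {f i j | i j. i < N \<and> j < N \<and> i \<noteq> j}"
  by (rule finite_subset[of _ "(\<lambda>(i, j). f i j) ` ({..<N} \<times> {..<N})"]) auto

lemma offdiagonal_values_nonempty:
  fixes f :: "nat \<Rightarrow> nat \<Rightarrow> 'a"
  assumes "2 \<le> N"
  shows "{f i j | i j. i < N \<and> j < N \<and> i \<noteq> j} \<noteq> {}"
proof -
  have "f 0 1 \<in> {f i j | i j. i < N \<and> j < N \<and> i \<noteq> j}"
    using assms by force
  then show ?thesis
    by blast
qed

lemma kenergy_ge_bond_energy:
  assumes c_sym: "\<And>i j. i < N \<Longrightarrow> j < N \<Longrightarrow> c i j = c j i"
    and ij: "i < N" "j < N" "i \<noteq> j" and "0 < \<kappa>2"
  shows "\<kappa>2 / (2 * real N) * (\<bar>Th j - Th i\<bar> - c i j)^2 \<le> kenergy N \<kappa>2 c Th W"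
proof -
  define g where "g a b = (\<bar>Th b - Th a\<bar> - c a b)^2" for a b
  have "g j i = g i j"
    using c_sym[OF ij(1,2)] by (simp add: g_def abs_minus_commute)
  moreover have "g i j \<le> (\<Sum>b<N. g i b)" "g j i \<le> (\<Sum>b<N. g j b)"
    using ij by (auto intro!: member_le_sum simp: g_def)
  moreover have "(\<Sum>a\<in>{i, j}. \<Sum>b<N. g a b) \<le> (\<Sum>a<N. \<Sum>b<N. g a b)"
    using ij by (intro sum_mono2) (auto simp: g_def intro: sum_nonneg)
  ultimately have "2 * g i j \<le> (\<Sum>a<N. \<Sum>b<N. g a b)"
    using ij(3) by simp
  then have "\<kappa>2 / (4 * real N) * (2 * g i j) \<le> \<kappa>2 / (4 * real N) * (\<Sum>a<N. \<Sum>b<N. g a b)"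
    using \<open>0 < \<kappa>2\<close> by (intro mult_left_mono) auto
  moreover have "\<kappa>2 / (4 * real N) * (\<Sum>a<N. \<Sum>b<N. g a b) \<le> kenergy N \<kappa>2 c Th W"
    unfolding kenergy_def g_def by (simp add: sum_nonneg)
  ultimately show ?thesis
    by (simp add: g_def)
qed

lemma kenergy_bond_deviation:
  assumes "\<And>i j. i < N \<Longrightarrow> j < N \<Longrightarrow> c i j = c j i"
    and ij: "i < N" "j < N" "i \<noteq> j" and "0 < \<kappa>2"
    and "kenergy N \<kappa>2 c Th W \<le> E"
  shows "\<bar>\<bar>Th j - Th i\<bar> - c i j\<bar> \<le> sqrt (2 * real N * E / \<kappa>2)"
proof -
  have "0 < real N"
    using ij by simp
  have "\<kappa>2 / (2 * real N) * (\<bar>Th j - Th i\<bar> - c i j)^2 \<le> E"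
    using kenergy_ge_bond_energy[where c = c and Th = Th and W = W, OF assms(1-5)] assms(6)
    by linarith
  then have "(\<bar>Th j - Th i\<bar> - c i j)^2 \<le> 2 * real N * E / \<kappa>2"
    using \<open>0 < \<kappa>2\<close> \<open>0 < real N\<close> by (simp add: field_simps)
  then show ?thesis
    by (metis real_le_rsqrt power2_abs)
qed

lemma bond_length_within_bounds:
  assumes "\<And>i j. i < N \<Longrightarrow> j < N \<Longrightarrow> c i j = c j i"
    and ij: "i < N" "j < N" "i \<noteq> j" and "0 < \<kappa>2"
    and "kenergy N \<kappa>2 c Th W \<le> E"
  shows "Lbound N \<kappa>2 c E \<le> \<bar>Th j - Th i\<bar> \<and> \<bar>Th j - Th i\<bar> \<le> Ubound N \<kappa>2 c E"
proof -
  have "c i j \<in> {c i j | i j. i < N \<and> j < N \<and> i \<noteq> j}"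
    using ij by blast
  then have "Min {c i j | i j. i < N \<and> j < N \<and> i \<noteq> j} \<le> c i j"
    "c i j \<le> Max {c i j | i j. i < N \<and> j < N \<and> i \<noteq> j}"
    by (simp_all add: finite_offdiagonal_values)
  with kenergy_bond_deviation[OF assms] show ?thesis
    unfolding Lbound_def Ubound_def by linarith
qed

lemma Lbound_pos:
  assumes "2 \<le> N" and c_sym: "\<And>i j. i < N \<Longrightarrow> j < N \<Longrightarrow> c i j = c j i" and "0 < \<kappa>2"
    and bounded: "kenergy N \<kappa>2 c Th W \<le> E"
    and small: "E < \<kappa>2 * (Min {c i j | i j. i < N \<and> j < N \<and> i \<noteq> j})^2 / (2 * real N)"
  shows "0 < Lbound N \<kappa>2 c E"
proof -
  define m where "m = Min {c i j | i j. i < N \<and> j < N \<and> i \<noteq> j}"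
  define r where "r = sqrt (2 * real N * E / \<kappa>2)"
  have "m \<in> {c i j | i j. i < N \<and> j < N \<and> i \<noteq> j}"
    unfolding m_def using \<open>2 \<le> N\<close> by (intro Min_in finite_offdiagonal_values offdiagonal_values_nonempty)
  then obtain i j where ij: "i < N" "j < N" "i \<noteq> j" and "c i j = m"
    by blast
  have "2 * real N * E / \<kappa>2 < m^2"
    using small \<open>0 < \<kappa>2\<close> \<open>2 \<le> N\<close> by (simp add: m_def field_simps)
  then have "r < \<bar>m\<bar>"
    unfolding r_def by (metis real_sqrt_abs real_sqrt_less_mono)
  moreover have "\<bar>\<bar>Th j - Th i\<bar> - m\<bar> \<le> r"
    unfolding r_def \<open>c i j = m\<close>[symmetric] by (rule kenergy_bond_deviation[OF c_sym ij \<open>0 < \<kappa>2\<close> bounded])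
  \<comment> \<open>bond lengths are nonnegative, so a rest length \<open>m \<le> 0\<close> would force a deviation \<open>\<ge> \<bar>m\<bar>\<close>\<close>
  ultimately have "0 < m"
    by (cases "0 < m") auto
  with \<open>r < \<bar>m\<bar>\<close> show ?thesis
    by (simp add: Lbound_def m_def r_def)
qed

locale bonded_kuramoto =
  fixes N :: nat and \<kappa>0 \<kappa>1 \<kappa>2 :: real and thinf :: "nat \<Rightarrow> nat \<Rightarrow> real"
    and \<theta> \<omega> :: "real \<Rightarrow> nat \<Rightarrow> real"
  assumes N_pos: "0 < N"
    and thinf_sym: "\<And>i j. i < N \<Longrightarrow> j < N \<Longrightarrow> thinf i j = thinf j i"
    and theta_deriv: "\<And>i t. i < N \<Longrightarrow> 0 \<le> t \<Longrightarrow>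
        ((\<lambda>s. \<theta> s i) has_real_derivative \<omega> t i) (at t within {0..})"
    and omega_deriv: "\<And>i t. i < N \<Longrightarrow> 0 \<le> t \<Longrightarrow>
        ((\<lambda>s. \<omega> s i) has_real_derivative
          (1 / real N) * (\<Sum>j<N. (\<kappa>0 * cos (\<theta> t j - \<theta> t i) + \<kappa>1) * (\<omega> t j - \<omega> t i))
          + (\<kappa>2 / real N) * (\<Sum>j<N. (\<bar>\<theta> t j - \<theta> t i\<bar> - thinf i j) * sgn (\<theta> t j - \<theta> t i)))
        (at t within {0..})"
begin

definition energy :: "real \<Rightarrow> real" where
  "energy t = kenergy N \<kappa>2 thinf (\<theta> t) (\<omega> t)"

text \<open>Separation is required because \<open>\<bar>\<theta>\<^sub>j - \<theta>\<^sub>i\<bar>\<close> is not differentiable where it vanishes.\<close>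

definition regular :: "real \<Rightarrow> bool" where
  "regular t \<longleftrightarrow> (\<forall>i<N. \<forall>j<N. i \<noteq> j \<longrightarrow>
      \<theta> t j \<noteq> \<theta> t i \<and> 0 < \<kappa>0 * cos (\<theta> t j - \<theta> t i) + \<kappa>1)"

lemma theta_has_derivative_at:
  assumes "i < N" "0 < t"
  shows "((\<lambda>s. \<theta> s i) has_real_derivative \<omega> t i) (at t)"
  using theta_deriv[OF assms(1) less_imp_le[OF assms(2)]] unfolding at_within_atLeast[OF assms(2)] .

lemma omega_has_derivative_at:
  assumes "i < N" "0 < t"
  shows "((\<lambda>s. \<omega> s i) has_real_derivative
      (1 / real N) * (\<Sum>j<N. (\<kappa>0 * cos (\<theta> t j - \<theta> t i) + \<kappa>1) * (\<omega> t j - \<omega> t i))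
      + (\<kappa>2 / real N) * (\<Sum>j<N. bond_force thinf (\<theta> t) i j)) (at t)"
  using omega_deriv[OF assms(1) less_imp_le[OF assms(2)]]
  unfolding at_within_atLeast[OF assms(2)] bond_force_def .

lemma theta_continuous: "i < N \<Longrightarrow> continuous_on {0..} (\<lambda>s. \<theta> s i)"
  using DERIV_continuous[OF theta_deriv] continuous_on_eq_continuous_within by blast

lemma omega_continuous: "i < N \<Longrightarrow> continuous_on {0..} (\<lambda>s. \<omega> s i)"
  using DERIV_continuous[OF omega_deriv] continuous_on_eq_continuous_within by blast

lemma energy_continuous: "continuous_on {0..} energy"
  unfolding energy_def[abs_def] kenergy_def
  by (intro continuous_intros) (auto intro: theta_continuous omega_continuous)

lemma energy_derivative_nonpos:
  assumes "0 < t" and "regular t"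
  shows "\<exists>D. (energy has_real_derivative D) (at t) \<and> D \<le> 0"
proof -
  define a where "a i j = \<kappa>0 * cos (\<theta> t j - \<theta> t i) + \<kappa>1" for i j
  have "(energy has_real_derivative -(1 / (2 * real N)) * (\<Sum>i<N. \<Sum>j<N. a i j * (\<omega> t j - \<omega> t i)^2)) (at t)"
    unfolding energy_def[abs_def]
  proof (rule kenergy_dissipation[OF N_pos thinf_sym])
    show "a i j = a j i" for i j
      unfolding a_def by (metis cos_minus minus_diff_eq)
    show "((\<lambda>s. \<theta> s i) has_real_derivative \<omega> t i) (at t)" if "i < N" for i
      using that \<open>0 < t\<close> by (rule theta_has_derivative_at)
    show "((\<lambda>s. \<omega> s i) has_real_derivative (1 / real N) * (\<Sum>j<N. a i j * (\<omega> t j - \<omega> t i))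
        + (\<kappa>2 / real N) * (\<Sum>j<N. bond_force thinf (\<theta> t) i j)) (at t)" if "i < N" for i
      unfolding a_def using that \<open>0 < t\<close> by (rule omega_has_derivative_at)
    show "\<theta> t j \<noteq> \<theta> t i" if "i < N" "j < N" "i \<noteq> j" for i j
      using \<open>regular t\<close> that by (simp add: regular_def)
  qed
  moreover have "0 \<le> a i j * (\<omega> t j - \<omega> t i)^2" if "i < N" "j < N" for i j
  proof (cases "i = j")
    case False
    with \<open>regular t\<close> that have "0 < a i j"
      by (simp add: regular_def a_def)
    then show ?thesis
      by simp
  qed simp
  then have "0 \<le> (\<Sum>i<N. \<Sum>j<N. a i j * (\<omega> t j - \<omega> t i)^2)"
    by (auto intro!: sum_nonneg)
  ultimately show ?thesis
    using N_pos by (intro exI[of _ "-(1 / (2 * real N)) * _"]) auto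
qed

lemma regular_eventually:
  assumes "0 \<le> s" and "regular s"
  shows "eventually regular (at s within {0..})"
proof -
  have "\<forall>\<^sub>F u in at s within {0..}. \<forall>i\<in>{..<N}. \<forall>j\<in>{..<N}. i \<noteq> j \<longrightarrow>
      \<theta> u j \<noteq> \<theta> u i \<and> 0 < \<kappa>0 * cos (\<theta> u j - \<theta> u i) + \<kappa>1"
  proof (intro eventually_ball_finite finite_lessThan ballI)
    fix i j assume ij: "i \<in> {..<N}" "j \<in> {..<N}"
    have "((\<lambda>u. \<theta> u k) \<longlongrightarrow> \<theta> s k) (at s within {0..})" if "k < N" for k
      using DERIV_continuous[OF theta_deriv[OF that \<open>0 \<le> s\<close>]] by (simp add: continuous_within)
    then have gap: "((\<lambda>u. \<theta> u j - \<theta> u i) \<longlongrightarrow> \<theta> s j - \<theta> s i) (at s within {0..})"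
      using ij by (intro tendsto_diff) auto
    show "\<forall>\<^sub>F u in at s within {0..}. i \<noteq> j \<longrightarrow>
        \<theta> u j \<noteq> \<theta> u i \<and> 0 < \<kappa>0 * cos (\<theta> u j - \<theta> u i) + \<kappa>1"
    proof (cases "i = j")
      case False
      with \<open>regular s\<close> ij have ne: "\<theta> s j - \<theta> s i \<noteq> 0"
        and pos: "0 < \<kappa>0 * cos (\<theta> s j - \<theta> s i) + \<kappa>1"
        by (auto simp: regular_def)
      have "\<forall>\<^sub>F u in at s within {0..}. \<theta> u j - \<theta> u i \<noteq> 0"
        using gap ne by (rule tendsto_imp_eventually_ne)
      moreover have "((\<lambda>u. \<kappa>0 * cos (\<theta> u j - \<theta> u i) + \<kappa>1)
          \<longlongrightarrow> \<kappa>0 * cos (\<theta> s j - \<theta> s i) + \<kappa>1) (at s within {0..})"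
        by (intro tendsto_add tendsto_mult_left tendsto_cos gap tendsto_const)
      then have "\<forall>\<^sub>F u in at s within {0..}. 0 < \<kappa>0 * cos (\<theta> u j - \<theta> u i) + \<kappa>1"
        using pos by (rule order_tendstoD(1))
      ultimately show ?thesis
        by eventually_elim simp
    qed simp
  qed
  then show ?thesis
    by (rule eventually_mono) (simp add: regular_def)
qed

lemma energy_locally_nonincreasing:
  assumes "0 \<le> s" and "regular s"
  shows "\<exists>s'>s. \<forall>x. s < x \<longrightarrow> x < s' \<longrightarrow> (\<exists>D. (energy has_real_derivative D) (at x) \<and> D \<le> 0)"
proof -
  obtain d where "0 < d" and d: "\<And>x. x \<in> {0..} \<Longrightarrow> x \<noteq> s \<Longrightarrow> dist x s < d \<Longrightarrow> regular x"
    using regular_eventually[OF assms] unfolding eventually_at by blast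
  have "\<exists>D. (energy has_real_derivative D) (at x) \<and> D \<le> 0" if "s < x" "x < s + d" for x
    using that \<open>0 \<le> s\<close> by (intro energy_derivative_nonpos d) (auto simp: dist_real_def)
  with \<open>0 < d\<close> show ?thesis
    by (intro exI[of _ "s + d"]) auto
qed

lemma regular_if_bond_lengths_bounded:
  assumes "\<And>i j. i < N \<Longrightarrow> j < N \<Longrightarrow> i \<noteq> j \<Longrightarrow> 0 < \<bar>\<theta> t j - \<theta> t i\<bar> \<and> \<bar>\<theta> t j - \<theta> t i\<bar> \<le> U"
    and "U < pi" and "0 \<le> \<kappa>0" and "0 < \<kappa>0 * cos U + \<kappa>1"
  shows "regular t"
  unfolding regular_def
proof (intro allI impI conjI)
  fix i j assume ij: "i < N" "j < N" "i \<noteq> j"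
  then show "\<theta> t j \<noteq> \<theta> t i"
    using assms(1) by fastforce
  have "cos U \<le> cos \<bar>\<theta> t j - \<theta> t i\<bar>"
    using assms(1)[OF ij] \<open>U < pi\<close> by (intro cos_monotone_0_pi_le) auto
  then have "\<kappa>0 * cos U \<le> \<kappa>0 * cos (\<theta> t j - \<theta> t i)"
    using \<open>0 \<le> \<kappa>0\<close> by (simp add: mult_left_mono)
  with assms(4) show "0 < \<kappa>0 * cos (\<theta> t j - \<theta> t i) + \<kappa>1"
    by linarith
qed

lemma energy_le_initial:
  assumes sublevel_regular: "\<And>s. 0 \<le> s \<Longrightarrow> energy s \<le> energy 0 \<Longrightarrow> regular s" and "0 \<le> t"
  shows "energy t \<le> energy 0"
proof (rule continuous_le_persists_under_local_descent[where E = energy and a = 0])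
  show "continuous_on {0..t} energy"
    using energy_continuous by (rule continuous_on_subset) auto
  show "\<exists>s'>s. \<forall>x. s < x \<longrightarrow> x < s' \<longrightarrow> (\<exists>D. (energy has_real_derivative D) (at x) \<and> D \<le> 0)"
    if "0 \<le> s" "s < t" "energy s \<le> energy 0" for s
    using that by (intro energy_locally_nonincreasing sublevel_regular)
qed (use \<open>0 \<le> t\<close> in auto)

end

theorem corollary3p1:
  fixes N :: nat and \<kappa>0 \<kappa>1 \<kappa>2 :: real
    and thinf :: "nat \<Rightarrow> nat \<Rightarrow> real"
    and \<theta> \<omega> :: "real \<Rightarrow> nat \<Rightarrow> real"
  assumes N2: "N \<ge> 2"
    and k0: "\<kappa>0 \<ge> 0" and k1: "\<kappa>1 \<ge> 0" and k2: "\<kappa>2 > 0"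
    and sym: "\<And>i j. i < N \<Longrightarrow> j < N \<Longrightarrow> thinf i j = thinf j i"
    and diag: "\<And>i. i < N \<Longrightarrow> thinf i i = 0"
    and dtheta: "\<And>i t. i < N \<Longrightarrow> t \<ge> 0 \<Longrightarrow>
        ((\<lambda>s. \<theta> s i) has_real_derivative \<omega> t i) (at t within {0..})"
    and domega: "\<And>i t. i < N \<Longrightarrow> t \<ge> 0 \<Longrightarrow>
        ((\<lambda>s. \<omega> s i) has_real_derivative
          (1 / real N) * (\<Sum>j<N. (\<kappa>0 * cos (\<theta> t j - \<theta> t i) + \<kappa>1) * (\<omega> t j - \<omega> t i))
          + (\<kappa>2 / real N) * (\<Sum>j<N. (\<bar>\<theta> t j - \<theta> t i\<bar> - thinf i j) * sgn (\<theta> t j - \<theta> t i)))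
        (at t within {0..})"
    and inS: "\<And>i j. i < N \<Longrightarrow> j < N \<Longrightarrow>
        \<bar>\<theta> 0 i - \<theta> 0 j\<bar> < Ubound N \<kappa>2 thinf (kenergy N \<kappa>2 thinf (\<theta> 0) (\<omega> 0))"
    and Upi: "Ubound N \<kappa>2 thinf (kenergy N \<kappa>2 thinf (\<theta> 0) (\<omega> 0)) < pi"
    and E0small: "kenergy N \<kappa>2 thinf (\<theta> 0) (\<omega> 0)
        < \<kappa>2 * (Min {thinf i j | i j. i < N \<and> j < N \<and> i \<noteq> j})^2 / (2 * real N)"
    and coupling: "\<kappa>0 * cos (Ubound N \<kappa>2 thinf (kenergy N \<kappa>2 thinf (\<theta> 0) (\<omega> 0))) + \<kappa>1 > 0"
  shows "(INF t\<in>{0..}. Min {\<bar>\<theta> t j - \<theta> t i\<bar> | i j. i < N \<and> j < N \<and> i \<noteq> j})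
            \<ge> Lbound N \<kappa>2 thinf (kenergy N \<kappa>2 thinf (\<theta> 0) (\<omega> 0))
       \<and> Lbound N \<kappa>2 thinf (kenergy N \<kappa>2 thinf (\<theta> 0) (\<omega> 0)) > 0"
proof -
  interpret bonded_kuramoto N \<kappa>0 \<kappa>1 \<kappa>2 thinf \<theta> \<omega>
    using N2 sym dtheta domega by unfold_locales auto
  define E0 where "E0 = kenergy N \<kappa>2 thinf (\<theta> 0) (\<omega> 0)"
  have bond_lengths: "Lbound N \<kappa>2 thinf E0 \<le> \<bar>\<theta> s j - \<theta> s i\<bar> \<and> \<bar>\<theta> s j - \<theta> s i\<bar> \<le> Ubound N \<kappa>2 thinf E0"
    if "energy s \<le> energy 0" "i < N" "j < N" "i \<noteq> j" for s i j
    using bond_length_within_bounds[where c = thinf and Th = "\<theta> s" and W = "\<omega> s", OF sym that(2-4) k2]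
      that(1)
    unfolding energy_def E0_def by blast
  have L_pos: "0 < Lbound N \<kappa>2 thinf E0"
    unfolding E0_def
    using Lbound_pos[where c = thinf and Th = "\<theta> 0" and W = "\<omega> 0", OF N2 sym k2 order_refl E0small] .
  have "regular s" if "0 \<le> s" "energy s \<le> energy 0" for s
    using bond_lengths[OF that(2)] L_pos Upi k0 coupling unfolding E0_def
    by (intro regular_if_bond_lengths_bounded) fastforce+
  then have "Lbound N \<kappa>2 thinf E0 \<le> Min {\<bar>\<theta> t j - \<theta> t i\<bar> | i j. i < N \<and> j < N \<and> i \<noteq> j}"
    if "0 \<le> t" for t
    using bond_lengths[OF energy_le_initial[OF _ that]]
    by (subst Min_ge_iff[OF finite_offdiagonal_values offdiagonal_values_nonempty[OF N2]]) blast+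
  with L_pos show ?thesis
    unfolding E0_def by (auto intro: cINF_greatest)
qed

end
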